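(* Let $C$ be a coalgebra over a field and $A=C^*$. Let $I_1\subseteq I_2\subseteq\cdots$ be an ascending chain of ideals of $A$, each closed in the finite topology. Then $\bigcup_n I_n$ is closed in the finite topology if and only if the chain terminates, i.e. $I_n=I_{n+1}=\cdots$ for some $n$.
   Context: $C^*$ is the dual algebra of the coalgebra $C$ with convolution product. For a subspace $X\subseteq C$ let $X^\perp=\{f\in C^*\mid f(X)=0\}$, and for $Y\subseteq C^*$ let $Y^\perp=\{c\in C\mid f(c)=0\ \forall f\in Y\}$. A subspace $W\subseteq C^*$ is closed in the finite topology iff $W=W^{\perp\perp}$, equivalently $W=X^\perp$ for some subspace $X\subseteq C$. *)

theory Defs
  imports Complex_Main
begin

text \<open>The comultiplication is given by a finite representation
  delta c = [(c1_1,c2_1),...,(c1_m,c2_m)] of the tensor sum c1_i (x) c2_i. Since we have no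
  tensor product library, tensors are handled via their universal property: an element of
  C (x) C is determined by its values on all bilinear forms, and C (x) C (x) C by trilinear forms.\<close>

definition bilinear_form :: "('k::field \<Rightarrow> 'c::ab_group_add \<Rightarrow> 'c) \<Rightarrow> ('c \<Rightarrow> 'c \<Rightarrow> 'k) \<Rightarrow> bool" where
  "bilinear_form scale B \<longleftrightarrow>
     (\<forall>x. Vector_Spaces.linear scale (*) (B x)) \<and>
     (\<forall>y. Vector_Spaces.linear scale (*) (\<lambda>x. B x y))"

definition trilinear_form :: "('k::field \<Rightarrow> 'c::ab_group_add \<Rightarrow> 'c) \<Rightarrow> ('c \<Rightarrow> 'c \<Rightarrow> 'c \<Rightarrow> 'k) \<Rightarrow> bool" where
  "trilinear_form scale T \<longleftrightarrow>
     (\<forall>y z. Vector_Spaces.linear scale (*) (\<lambda>x. T x y z)) \<and>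
     (\<forall>x z. Vector_Spaces.linear scale (*) (\<lambda>y. T x y z)) \<and>
     (\<forall>x y. Vector_Spaces.linear scale (*) (\<lambda>z. T x y z))"

definition coalgebra ::
  "('k::field \<Rightarrow> 'c::ab_group_add \<Rightarrow> 'c) \<Rightarrow> ('c \<Rightarrow> ('c \<times> 'c) list) \<Rightarrow> ('c \<Rightarrow> 'k) \<Rightarrow> bool" where
  "coalgebra scale delta eps \<longleftrightarrow>
     vector_space scale \<and>
     Vector_Spaces.linear scale (*) eps \<and>
     \<comment> \<open>linearity of the comultiplication\<close>
     (\<forall>B. bilinear_form scale B \<longrightarrow>
        Vector_Spaces.linear scale (*) (\<lambda>c. \<Sum>(x,y)\<leftarrow>delta c. B x y)) \<and>
     \<comment> \<open>coassociativity\<close>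
     (\<forall>T c. trilinear_form scale T \<longrightarrow>
        (\<Sum>(x,y)\<leftarrow>delta c. \<Sum>(u,v)\<leftarrow>delta x. T u v y) =
        (\<Sum>(x,y)\<leftarrow>delta c. \<Sum>(u,v)\<leftarrow>delta y. T x u v)) \<and>
     \<comment> \<open>counit\<close>
     (\<forall>c. (\<Sum>(x,y)\<leftarrow>delta c. scale (eps x) y) = c) \<and>
     (\<forall>c. (\<Sum>(x,y)\<leftarrow>delta c. scale (eps y) x) = c)"

definition dual :: "('k::field \<Rightarrow> 'c::ab_group_add \<Rightarrow> 'c) \<Rightarrow> ('c \<Rightarrow> 'k) set" where
  "dual scale = {f. Vector_Spaces.linear scale (*) f}"

definition conv :: "('c \<Rightarrow> ('c \<times> 'c) list) \<Rightarrow> ('c \<Rightarrow> 'k::field) \<Rightarrow> ('c \<Rightarrow> 'k) \<Rightarrow> 'c \<Rightarrow> 'k" where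
  "conv delta f g = (\<lambda>c. \<Sum>(x,y)\<leftarrow>delta c. f x * g y)"

definition dual_ideal ::
  "('k::field \<Rightarrow> 'c::ab_group_add \<Rightarrow> 'c) \<Rightarrow> ('c \<Rightarrow> ('c \<times> 'c) list) \<Rightarrow> ('c \<Rightarrow> 'k) set \<Rightarrow> bool" where
  "dual_ideal scale delta I \<longleftrightarrow>
     I \<subseteq> dual scale \<and> (\<lambda>_. 0) \<in> I \<and>
     (\<forall>f\<in>I. \<forall>g\<in>I. (\<lambda>c. f c + g c) \<in> I) \<and>
     (\<forall>a. \<forall>f\<in>I. (\<lambda>c. a * f c) \<in> I) \<and>
     (\<forall>f\<in>I. \<forall>g\<in>dual scale. conv delta f g \<in> I \<and> conv delta g f \<in> I)"

definition perpC :: "('k::field \<Rightarrow> 'c::ab_group_add \<Rightarrow> 'c) \<Rightarrow> 'c set \<Rightarrow> ('c \<Rightarrow> 'k) set" where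
  "perpC scale X = {f \<in> dual scale. \<forall>x\<in>X. f x = 0}"

definition perpD :: "('c \<Rightarrow> 'k::field) set \<Rightarrow> 'c set" where
  "perpD Y = {c. \<forall>f\<in>Y. f c = 0}"

definition finite_closed :: "('k::field \<Rightarrow> 'c::ab_group_add \<Rightarrow> 'c) \<Rightarrow> ('c \<Rightarrow> 'k) set \<Rightarrow> bool" where
  "finite_closed scale W \<longleftrightarrow> W = perpC scale (perpD W)"

end

theory Submission
  imports Defs
begin

text \<open>If the chain does not stabilise, pass to a subsequence \<open>I (s k)\<close> that grows strictly at
  every step. Since closed subspaces are determined by their orthogonals, the subspaces
  \<open>Y k = (I (s k))\<^sup>\<perp>\<close> of \<open>C\<close> decrease strictly; picking \<open>c k \<in> Y k - Y (k+1)\<close>, a basis of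
  \<open>\<Inter>k Y k\<close> together with all \<open>c k\<close> is linearly independent. A functional that kills the basis
  and is \<open>1\<close> at every \<open>c k\<close> lies in the closure of \<open>\<Union>n I n\<close> but in no \<open>I n\<close>.\<close>

lemma vector_space_field_mult: "vector_space ((*) :: 'k::field \<Rightarrow> 'k \<Rightarrow> 'k)"
  by unfold_locales (auto simp: algebra_simps)

lemma not_eventually_const_imp_strict_mono_subseq:
  assumes "\<not> (\<exists>n. \<forall>m\<ge>n. f m = f n)"
  obtains s :: "nat \<Rightarrow> nat" where "strict_mono s" "\<And>k. f (s (Suc k)) \<noteq> f (s k)"
proof -
  have "\<exists>m. m > n \<and> f m \<noteq> f n" for n
    using assms by (metis le_eq_less_or_eq)
  then obtain next_change where next_change: "\<And>n. next_change n > n \<and> f (next_change n) \<noteq> f n"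
    by metis
  define s where "s k = (next_change ^^ k) 0" for k
  have step: "s (Suc k) > s k \<and> f (s (Suc k)) \<noteq> f (s k)" for k
    using next_change unfolding s_def by simp
  then have "strict_mono s" by (simp add: strict_mono_Suc_iff)
  then show thesis using that step by blast
qed

context vector_space
begin

lemma subspace_perpD:
  assumes "Y \<subseteq> dual scale"
  shows "subspace (perpD Y)"
proof -
  interpret P: vector_space_pair scale "(*)"
    unfolding vector_space_pair_def using vector_space_axioms vector_space_field_mult by blast
  have "Vector_Spaces.linear scale (*) f" if "f \<in> Y" for f
    using that assms unfolding dual_def by blast
  then show ?thesis
    unfolding subspace_def perpD_def by (auto simp: P.linear_0 P.linear_add P.linear_scale)
qed

lemma independent_Un_range_chain_witnesses:
  assumes Y_subspace: "\<And>k. subspace (Y k)"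
    and Y_decr: "\<And>k. Y (Suc k) \<subseteq> Y k"
    and B: "independent B" "B \<subseteq> \<Inter>(range Y)"
    and c: "\<And>k. c k \<in> Y k" "\<And>k. c k \<notin> Y (Suc k)"
  shows "independent (B \<union> range c)"
proof -
  have Y_antimono: "j \<le> k \<Longrightarrow> Y k \<subseteq> Y j" for j k
    using lift_Suc_antimono_le[of Y, OF Y_decr] by blast
  have independent_finite: "independent (B \<union> c ` K)" if "finite K" for K
    using that
  proof (induction K rule: finite_linorder_min_induct)
    case empty
    then show ?case using B(1) by simp
  next
    case (insert b A)
    \<comment> \<open>all later witnesses and the basis lie in \<open>Y (Suc b)\<close>, which misses \<open>c b\<close>\<close>
    have "c a \<in> Y (Suc b)" if "a \<in> A" for a
      using c(1)[of a] Y_antimono[of "Suc b" a] insert(2) that by (auto simp: Suc_le_eq)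
    then have "B \<union> c ` A \<subseteq> Y (Suc b)"
      using B(2) by blast
    then have "span (B \<union> c ` A) \<subseteq> Y (Suc b)"
      using span_minimal Y_subspace by blast
    then have "c b \<notin> span (B \<union> c ` A)"
      using c(2)[of b] by blast
    then show ?case
      using independent_insertI insert(3) by simp
  qed
  have "independent (\<Union>k. B \<union> c ` {..<k})"
  proof (rule independent_Union_directed)
    fix C D assume "C \<in> range (\<lambda>k. B \<union> c ` {..<k})" "D \<in> range (\<lambda>k. B \<union> c ` {..<k})"
    then obtain i j where "C = B \<union> c ` {..<i}" "D = B \<union> c ` {..<j}" by blast
    then show "C \<subseteq> D \<or> D \<subseteq> C" by (cases "i \<le> j") auto
  qed (use independent_finite in blast)
  moreover have "(\<Union>k. B \<union> c ` {..<k}) = B \<union> range c"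
    by auto
  ultimately show ?thesis by simp
qed

lemma strictly_decreasing_chain_functional:
  assumes Y_subspace: "\<And>k. subspace (Y k)"
    and Y_decr: "\<And>k. Y (Suc k) \<subseteq> Y k"
    and Y_strict: "\<And>k. Y (Suc k) \<noteq> Y k"
  obtains g where "Vector_Spaces.linear scale (*) g" "\<forall>x\<in>\<Inter>(range Y). g x = 0"
    "\<forall>k. \<exists>y\<in>Y k. g y \<noteq> 0"
proof -
  interpret P: vector_space_pair scale "(*)"
    unfolding vector_space_pair_def using vector_space_axioms vector_space_field_mult by blast
  have "\<exists>x. x \<in> Y k \<and> x \<notin> Y (Suc k)" for k
    using Y_decr[of k] Y_strict[of k] by blast
  then obtain c where c: "\<And>k. c k \<in> Y k" "\<And>k. c k \<notin> Y (Suc k)"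
    by metis
  obtain B where B: "B \<subseteq> \<Inter>(range Y)" "independent B" "\<Inter>(range Y) \<subseteq> span B"
    by (rule basis_exists)
  have independent: "independent (B \<union> range c)"
    using independent_Un_range_chain_witnesses[OF Y_subspace Y_decr B(2,1) c] .
  have c_notin_B: "c k \<notin> B" for k
    using c(2)[of k] B(1) by blast
  obtain g where g: "Vector_Spaces.linear scale (*) g"
    "\<forall>x\<in>B \<union> range c. g x = (if x \<in> B then 0 else 1)"
    using P.linear_independent_extend[OF independent, of "\<lambda>x. if x \<in> B then 0 else 1"]
    by blast
  have "g x = 0" if "x \<in> \<Inter>(range Y)" for x
    using P.linear_eq_0_on_span[OF g(1), of B x] g(2) B(3) that by auto
  moreover have "g (c k) \<noteq> 0" for k
    using g(2) c_notin_B[of k] by auto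
  ultimately show thesis
    using that g(1) c(1) by blast
qed

lemma Union_not_finite_closed_if_strictly_increasing:
  assumes I_dual: "\<And>k. I k \<subseteq> dual scale"
    and I_closed: "\<And>k. finite_closed scale (I k)"
    and I_incr: "\<And>k. I k \<subseteq> I (Suc k)"
    and I_strict: "\<And>k. I (Suc k) \<noteq> I k"
  shows "\<not> finite_closed scale (\<Union>k. I k)"
proof
  assume closed_Union: "finite_closed scale (\<Union>k. I k)"
  define Y where "Y k = perpD (I k)" for k
  have Y_subspace: "subspace (Y k)" for k
    unfolding Y_def using I_dual by (rule subspace_perpD)
  have Y_decr: "Y (Suc k) \<subseteq> Y k" for k
    unfolding Y_def perpD_def using I_incr[of k] by blast
  have Y_strict: "Y (Suc k) \<noteq> Y k" for k
    unfolding Y_def using I_strict[of k] I_closed unfolding finite_closed_def by metis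
  obtain g where g: "Vector_Spaces.linear scale (*) g"
    "\<forall>x\<in>\<Inter>(range Y). g x = 0" "\<forall>k. \<exists>y\<in>Y k. g y \<noteq> 0"
    by (rule strictly_decreasing_chain_functional[of Y, OF Y_subspace Y_decr Y_strict])
  have "perpD (\<Union>k. I k) \<subseteq> \<Inter>(range Y)"
    unfolding Y_def perpD_def by blast
  then have "g \<in> perpC scale (perpD (\<Union>k. I k))"
    using g(1,2) unfolding perpC_def dual_def by blast
  then have "g \<in> (\<Union>k. I k)"
    using closed_Union unfolding finite_closed_def by simp
  then obtain m where "g \<in> I m"
    by blast
  then show False
    using g(3) unfolding Y_def perpD_def by blast
qed

end

lemma Union_eq_if_eventually_const:
  assumes "\<And>k. A k \<subseteq> A (Suc k)" and "\<forall>m\<ge>n. A m = A n"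
  shows "(\<Union>k. A k) = A n"
proof -
  have "A m \<subseteq> A n" for m
  proof (cases "m \<le> n")
    case True
    then show ?thesis using lift_Suc_mono_le[of A, OF assms(1)] by blast
  next
    case False
    then show ?thesis using assms(2)[rule_format, of m] by simp
  qed
  then show ?thesis by blast
qed

lemma Union_strict_mono_subseq:
  assumes "\<And>k. A k \<subseteq> A (Suc k)" and "strict_mono (s :: nat \<Rightarrow> nat)"
  shows "(\<Union>k. A (s k)) = (\<Union>k. A k)"
proof -
  have "A k \<subseteq> A (s k)" for k
    using lift_Suc_mono_le[of A, OF assms(1)] strict_mono_imp_increasing[OF assms(2)] by blast
  then show ?thesis by blast
qed

theorem lemma3p2:
  fixes scale :: "'k::field \<Rightarrow> 'c::ab_group_add \<Rightarrow> 'c"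
    and delta :: "'c \<Rightarrow> ('c \<times> 'c) list"
    and eps :: "'c \<Rightarrow> 'k"
    and I :: "nat \<Rightarrow> ('c \<Rightarrow> 'k) set"
  assumes "coalgebra scale delta eps"
    and "\<And>n. dual_ideal scale delta (I n)"
    and "\<And>n. finite_closed scale (I n)"
    and "\<And>n. I n \<subseteq> I (Suc n)"
  shows "finite_closed scale (\<Union>n. I n) \<longleftrightarrow> (\<exists>n. \<forall>m\<ge>n. I m = I n)"
proof
  assume "\<exists>n. \<forall>m\<ge>n. I m = I n"
  then obtain n where "\<forall>m\<ge>n. I m = I n" by blast
  then have "(\<Union>n. I n) = I n"
    by (rule Union_eq_if_eventually_const[of I, OF assms(4)])
  then show "finite_closed scale (\<Union>n. I n)"
    using assms(3)[of n] by (simp only:)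
next
  assume closed_Union: "finite_closed scale (\<Union>n. I n)"
  interpret vector_space scale
    using assms(1) unfolding coalgebra_def by blast
  show "\<exists>n. \<forall>m\<ge>n. I m = I n"
  proof (rule ccontr)
    assume "\<not> (\<exists>n. \<forall>m\<ge>n. I m = I n)"
    then obtain s where s: "strict_mono s" "\<And>k. I (s (Suc k)) \<noteq> I (s k)"
      by (rule not_eventually_const_imp_strict_mono_subseq[of I]) blast
    have "I (s k) \<subseteq> I (s (Suc k))" for k
      using lift_Suc_mono_le[of I, OF assms(4)] s(1) by (simp add: strict_mono_less_eq)
    then have "\<not> finite_closed scale (\<Union>k. I (s k))"
      using assms(2,3) s(2) Union_not_finite_closed_if_strictly_increasing[of "I \<circ> s"]
      by (simp add: dual_ideal_def)
    then show False
      using closed_Union Union_strict_mono_subseq[of I, OF assms(4) s(1)] by simp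
  qed
qed

end
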